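(* Let $k,p,q$ be integers with $q>0$, $\gcd(p,q)=1$ and $kq-p$ even, and let $Q=Q_2(L)$ be the involutory quandle with generators $a,b,c$ and defining relations $$R1: c^{ab}=c,\qquad R2: a^{(ca)^q}=a^{(ba)^{(kq-p)/2}},\qquad R3: b^{(bc)^q}=b^{(ab)^{(kq-p)/2}}.$$ Then the following relations also hold in $Q$: $c^{(ac)^{2q}}=c$; $a^{(ca)^{2q}}=a$; $b^{(cb)^{2q}}=b$; $a^{(ba)^{(kq-p)/2}}=a^{(ac)^q}$; $b^{(ab)^{(kq-p)/2}}=b^{(bc)^q}$; for $0\le i\le q$ and $0\le j\le \vert kq-p\vert/2$: $a^{(ca)^i(ba)^jc}=a^{(ca)^ic(ba)^j}$, $b^{(cb)^i(ab)^jc}=b^{(cb)^ic(ab)^j}$, $a^{(ca)^i(ab)^jabc}=a^{(ca)^{i+1}(ba)^jb}$, $b^{(cb)^i(ba)^jbac}=b^{(cb)^{i+1}(ab)^ja}$; $c^{(ac)^ia}=c^{(ac)^ib}$ for all $i\ge 0$.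
   Context: An involutory quandle is a set with a binary operation $(x,y)\mapsto x^y$ satisfying $x^x=x$, $(x^y)^y=x$ and $(x^y)^z=(x^z)^{(y^z)}$; a presentation denotes the involutory quandle generated by the given generators subject to the given relations and these axioms. Exponents are read left to right: $x^{yz}=(x^y)^z$, and $z^w$ for a word $w$ means successive action by its letters; negative powers are interpreted via $(xy)^{-1}=yx$. This presentation is the involutory quandle of $L=L(k,p/q)\cup C$, the two-bridge link built from a block of $k$ half-twists and a rational $p/q$-tangle together with an unknotted axis $C$, in the case $kq-p$ even. *)

theory Defs
  imports Main
begin

definition inv_quandle :: "'a set \<Rightarrow> ('a \<Rightarrow> 'a \<Rightarrow> 'a) \<Rightarrow> bool" where
  "inv_quandle X op \<longleftrightarrow>
     (\<forall>x\<in>X. \<forall>y\<in>X. op x y \<in> X) \<and>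
     (\<forall>x\<in>X. op x x = x) \<and>
     (\<forall>x\<in>X. \<forall>y\<in>X. op (op x y) y = x) \<and>
     (\<forall>x\<in>X. \<forall>y\<in>X. \<forall>z\<in>X. op (op x y) z = op (op x z) (op y z))"

fun act :: "('a \<Rightarrow> 'a \<Rightarrow> 'a) \<Rightarrow> 'a \<Rightarrow> 'a list \<Rightarrow> 'a" where
  "act op x [] = x"
| "act op x (y # ys) = act op (op x y) ys"

text \<open>Integer power of a word; negative powers use the inverse word
  (w^{-1} = rev w, e.g. (xy)^{-1} = yx).\<close>
definition wpow :: "'a list \<Rightarrow> int \<Rightarrow> 'a list" where
  "wpow w n = (if 0 \<le> n then concat (replicate (nat n) w)
               else concat (replicate (nat (- n)) (rev w)))"

end

theory Submission
  imports Defs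
begin

(* Write S_x for the involution t |-> t^x; then S_(y^w) is S_y conjugated by S_w.
   By R1, c = c^(a b), so S_c commutes with S_a S_b and all its powers, while S_a inverts
   the rotation S_b S_a.  Hence moving a factor c a across (b a)^N flips the sign of N.
   Since gcd p q = 1 and k q - p is even, q is odd, and R2 gives
     a^((c a)^2q) = a^((b a)^N (c a)^q) = a^((c a)^q (b a)^-N) = a;
   likewise for b after rewriting R3, and for c by conjugating with a^((c a)^q) = a^((b a)^N).
   The remaining relations only use that c commutes with a b. *)

definition wpow_nat :: "'a list \<Rightarrow> nat \<Rightarrow> 'a list" where
  "wpow_nat w m = concat (replicate m w)"

lemma act_append [simp]: "act op x (u @ v) = act op (act op x u) v"
  by (induction u arbitrary: x) auto

lemma wpow_of_nat [simp]: "wpow w (int m) = wpow_nat w m"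
  by (simp add: wpow_def wpow_nat_def)

lemma wpow_0 [simp]: "wpow w 0 = []"
  by (simp add: wpow_def)

lemma wpow_uminus: "wpow w (- N) = wpow (rev w) N"
  by (auto simp: wpow_def)

lemma rev_wpow: "rev (wpow w N) = wpow (rev w) N"
  by (simp add: wpow_def rev_concat rev_map)

lemma rev_wpow_nat: "rev (wpow_nat w m) = wpow_nat (rev w) m"
  using rev_wpow[of w "int m"] by simp

lemma wpow_add_self: "wpow w N @ wpow w N = wpow w (2 * N)"
proof -
  have "nat (2 * N) = nat N + nat N" "nat (- (2 * N)) = nat (- N) + nat (- N)" by auto
  then show ?thesis by (simp add: wpow_def replicate_add)
qed

lemma wpow_nat_0 [simp]: "wpow_nat w 0 = []"
  by (simp add: wpow_nat_def)

lemma wpow_nat_Suc: "wpow_nat w (Suc m) = w @ wpow_nat w m"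
  by (simp add: wpow_nat_def)

lemma wpow_nat_Suc_right: "wpow_nat w (Suc m) = wpow_nat w m @ w"
  by (simp add: wpow_nat_def replicate_append_same[symmetric])

lemma wpow_nat_add: "wpow_nat w (m + n) = wpow_nat w m @ wpow_nat w n"
  by (simp add: wpow_nat_def replicate_add)

lemma wpow_nat_pair_snoc: "wpow_nat [x, y] m @ [x] = x # wpow_nat [y, x] m"
  by (induction m) (simp_all add: wpow_nat_Suc)

lemma set_wpow_nat_subset [simp]: "set w \<subseteq> A \<Longrightarrow> set (wpow_nat w m) \<subseteq> A"
  by (induction m) (auto simp: wpow_nat_Suc)

lemma set_wpow_subset [simp]: "set w \<subseteq> A \<Longrightarrow> set (wpow w N) \<subseteq> A"
  using set_wpow_nat_subset[of w A "nat N"] set_wpow_nat_subset[of "rev w" A "nat (- N)"]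
  by (simp add: wpow_def wpow_nat_def)

lemma odd_of_coprime_even_diff:
  fixes k p q :: int
  assumes "gcd p q = 1" and "even (k * q - p)"
  shows "odd q"
proof
  assume "even q"
  then have "even (k * q - (k * q - p))" using \<open>even (k * q - p)\<close> by (simp add: dvd_diff)
  then have "2 dvd gcd p q" using \<open>even q\<close> by simp
  then show False using \<open>gcd p q = 1\<close> by simp
qed

locale involutory_quandle =
  fixes X :: "'a set" and op :: "'a \<Rightarrow> 'a \<Rightarrow> 'a"
  assumes inv_quandle: "inv_quandle X op"
begin

lemma op_closed [simp]: "x \<in> X \<Longrightarrow> y \<in> X \<Longrightarrow> op x y \<in> X"
  using inv_quandle by (simp add: inv_quandle_def)

lemma op_idem [simp]: "x \<in> X \<Longrightarrow> op x x = x"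
  using inv_quandle by (simp add: inv_quandle_def)

lemma op_op_cancel [simp]: "x \<in> X \<Longrightarrow> y \<in> X \<Longrightarrow> op (op x y) y = x"
  using inv_quandle by (simp add: inv_quandle_def)

lemma op_right_distrib:
  "x \<in> X \<Longrightarrow> y \<in> X \<Longrightarrow> z \<in> X \<Longrightarrow> op (op x y) z = op (op x z) (op y z)"
  using inv_quandle unfolding inv_quandle_def by blast

lemma act_closed [simp]: "x \<in> X \<Longrightarrow> set w \<subseteq> X \<Longrightarrow> act op x w \<in> X"
  by (induction w arbitrary: x) auto

lemma act_rev_cancel [simp]: "t \<in> X \<Longrightarrow> set w \<subseteq> X \<Longrightarrow> act op (act op t w) (rev w) = t"
  by (induction w arbitrary: t) auto

lemma act_rev_fixed: "x \<in> X \<Longrightarrow> set w \<subseteq> X \<Longrightarrow> act op x w = x \<Longrightarrow> act op x (rev w) = x"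
  by (metis act_rev_cancel)

lemma act_rev_eq_of_double_fixed:
  assumes "x \<in> X" "set w \<subseteq> X" and "act op x (w @ w) = x"
  shows "act op x (rev w) = act op x w"
proof -
  have "act op x (rev w) = act op (act op (act op x w) w) (rev w)" using assms(3) by simp
  also have "\<dots> = act op x w" using assms(1,2) by simp
  finally show ?thesis .
qed

lemma act_wpow_nat_fixed: "act op x w = x \<Longrightarrow> act op x (wpow_nat w m) = x"
  by (induction m) (simp_all add: wpow_nat_Suc)

lemma act_wpow_fixed:
  assumes "x \<in> X" "set w \<subseteq> X" and "act op x w = x"
  shows "act op x (wpow w N) = x"
proof (cases N rule: int_cases2)
  case (nonneg m)
  then show ?thesis using assms(3) by (simp add: act_wpow_nat_fixed)
next
  case (nonpos m)
  have "act op x (rev w) = x" using assms by (rule act_rev_fixed)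
  then show ?thesis using nonpos by (simp add: wpow_uminus act_wpow_nat_fixed)
qed

lemma act_pair_fixed_iff:
  "x \<in> X \<Longrightarrow> y \<in> X \<Longrightarrow> z \<in> X \<Longrightarrow> act op z [x, y] = z \<longleftrightarrow> op z x = op z y"
  by (metis act.simps op_closed op_op_cancel)

lemma op_act: "x \<in> X \<Longrightarrow> y \<in> X \<Longrightarrow> set w \<subseteq> X \<Longrightarrow> op x (act op y w) = act op x (rev w @ y # w)"
proof (induction w arbitrary: x rule: rev_induct)
  case (snoc z w)
  then have z: "z \<in> X" and w: "set w \<subseteq> X" and Y: "act op y w \<in> X" by auto
  have "op x (act op y (w @ [z])) = op (op (op x z) z) (op (act op y w) z)"
    using snoc.prems z by simp
  also have "\<dots> = op (op (op x z) (act op y w)) z"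
    using op_right_distrib[of "op x z" "act op y w" z] snoc.prems z Y by simp
  also have "\<dots> = op (act op (op x z) (rev w @ y # w)) z"
    using snoc.IH snoc.prems z w by simp
  finally show ?case by simp
qed simp

definition acts_commute :: "'a list \<Rightarrow> 'a list \<Rightarrow> bool" where
  "acts_commute u v \<longleftrightarrow> (\<forall>t\<in>X. act op t (u @ v) = act op t (v @ u))"

lemma acts_commuteD: "acts_commute u v \<Longrightarrow> t \<in> X \<Longrightarrow> act op t (u @ v) = act op t (v @ u)"
  unfolding acts_commute_def by blast

lemma acts_commute_rev:
  assumes "set u \<subseteq> X" "set v \<subseteq> X" and "acts_commute u v"
  shows "acts_commute (rev u) v"
  unfolding acts_commute_def
proof
  fix t assume t: "t \<in> X"
  have "act op t (rev u @ v) = act op (act op (act op t (rev u @ v)) u) (rev u)"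
    using t assms(1,2) by simp
  also have "\<dots> = act op (act op (act op t (rev u)) (u @ v)) (rev u)"
    using assms(3) t assms(1) unfolding acts_commute_def by simp
  also have "\<dots> = act op t (v @ rev u)"
    using act_rev_cancel[of t "rev u"] t assms(1) by simp
  finally show "act op t (rev u @ v) = act op t (v @ rev u)" .
qed

lemma acts_commute_wpow_nat:
  assumes "set u \<subseteq> X" and "acts_commute u v"
  shows "acts_commute (wpow_nat u m) v"
  unfolding acts_commute_def
proof (induction m)
  case (Suc m)
  show ?case
  proof
    fix t assume t: "t \<in> X"
    have s: "act op t (wpow_nat u m) \<in> X" using t assms(1) by simp
    have "act op t (wpow_nat u (Suc m) @ v) = act op (act op t (wpow_nat u m)) (v @ u)"
      using assms(2) s unfolding acts_commute_def by (simp add: wpow_nat_Suc_right)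
    also have "\<dots> = act op t (v @ wpow_nat u (Suc m))"
      using Suc t by (simp add: wpow_nat_Suc_right)
    finally show "act op t (wpow_nat u (Suc m) @ v) = act op t (v @ wpow_nat u (Suc m))" .
  qed
qed simp

lemma acts_commute_wpow:
  assumes "set u \<subseteq> X" "set v \<subseteq> X" and "acts_commute u v"
  shows "acts_commute (wpow u N) v"
proof (cases N rule: int_cases2)
  case (nonneg m)
  then show ?thesis using assms acts_commute_wpow_nat by simp
next
  case (nonpos m)
  then show ?thesis using assms acts_commute_rev acts_commute_wpow_nat
    by (simp add: wpow_uminus)
qed

(* S_z = S_(z^(x y)) is S_z conjugated by S_x S_y (op_act). *)
lemma acts_commute_of_act_fixed:
  assumes "x \<in> X" "y \<in> X" "z \<in> X" and "act op z [x, y] = z"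
  shows "acts_commute [x, y] [z]"
  unfolding acts_commute_def
proof
  fix t assume t: "t \<in> X"
  have "act op t ([x, y] @ [z]) = op (act op t [x, y]) (act op z [x, y])" using assms(4) by simp
  also have "\<dots> = act op t [z, x, y]" using op_act[of "act op t [x, y]" z "[x, y]"] t assms(1-3) by simp
  finally show "act op t ([x, y] @ [z]) = act op t ([z] @ [x, y])" by simp
qed

lemma act_wpow_snoc_reflect:
  assumes "t \<in> X" "x \<in> X" "y \<in> X"
  shows "act op t (wpow [x, y] N @ [y]) = act op t (y # wpow [x, y] (- N))"
proof (cases N rule: int_cases2)
  case (nonneg m)
  show ?thesis
  proof (cases m)
    case (Suc n)
    have "wpow [x, y] N @ [y] = wpow_nat [x, y] n @ [x, y, y]"
      unfolding nonneg Suc wpow_of_nat by (simp add: wpow_nat_Suc_right)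
    moreover have "y # wpow [x, y] (- N) = y # y # wpow_nat [x, y] n @ [x]"
      unfolding nonneg Suc wpow_uminus wpow_of_nat by (simp add: wpow_nat_Suc wpow_nat_pair_snoc)
    ultimately show ?thesis using assms by simp
  qed (simp add: nonneg)
next
  case (nonpos m)
  then show ?thesis by (simp add: wpow_uminus wpow_nat_pair_snoc)
qed

lemma op_act_wpow_pair:
  assumes "t \<in> X" "x \<in> X" "y \<in> X"
  shows "op t (act op y (wpow [x, y] N)) = act op (op t y) (wpow [x, y] (2 * N))"
proof -
  have s: "set (wpow [x, y] M) \<subseteq> X" for M using assms(2,3) by simp
  have "op t (act op y (wpow [x, y] N)) = act op t (wpow [x, y] (- N) @ [y] @ wpow [x, y] N)"
    using op_act[OF assms(1,3) s] by (simp add: rev_wpow wpow_uminus)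
  also have "\<dots> = act op (op t y) (wpow [x, y] N @ wpow [x, y] N)"
    using act_wpow_snoc_reflect[OF assms, of "- N"] by simp
  finally show ?thesis by (simp add: wpow_add_self)
qed

(* Each factor z y passes (x y)^M: z commutes with it and y inverts it. *)
lemma act_wpow_alternate:
  assumes "x \<in> X" "y \<in> X" "z \<in> X" and "acts_commute [x, y] [z]" and "t \<in> X"
  shows "act op t (wpow [x, y] M @ wpow_nat [z, y] m)
    = act op t (wpow_nat [z, y] m @ wpow [x, y] ((- 1) ^ m * M))"
  using assms(5)
proof (induction m arbitrary: t M)
  case (Suc m)
  have "acts_commute (wpow [x, y] M) [z]" using acts_commute_wpow assms(1-4) by simp
  then have "act op t (wpow [x, y] M @ [z]) = act op t ([z] @ wpow [x, y] M)"
    using Suc.prems by (rule acts_commuteD)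
  then have "act op t (wpow [x, y] M @ [z, y]) = act op (op t z) (wpow [x, y] M @ [y])" by simp
  also have "\<dots> = act op t ([z, y] @ wpow [x, y] (- M))"
    using act_wpow_snoc_reflect assms(1-3) Suc.prems by simp
  finally show ?case
    using Suc.IH[of "act op t [z, y]" "- M"] Suc.prems assms(2,3) by (simp add: wpow_nat_Suc)
qed simp

lemma act_self_wpow_nat_double_fixed:
  assumes "x \<in> X" "y \<in> X" "z \<in> X" and "acts_commute [x, y] [z]" and "odd m"
    and rel: "act op y (wpow_nat [z, y] m) = act op y (wpow [x, y] M)"
  shows "act op y (wpow_nat [z, y] (2 * m)) = y"
proof -
  have "act op y (wpow_nat [z, y] (2 * m)) = act op y (wpow [x, y] M @ wpow_nat [z, y] m)"
    using rel by (simp add: mult_2 wpow_nat_add)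
  also have "\<dots> = act op y (wpow_nat [z, y] m @ wpow [x, y] (- M))"
    using act_wpow_alternate[OF assms(1-4) assms(2)] \<open>odd m\<close> by simp
  also have "\<dots> = act op (act op y (wpow [x, y] M)) (rev (wpow [x, y] M))"
    using rel by (simp add: rev_wpow wpow_uminus)
  also have "\<dots> = y" using assms(1,2) by simp
  finally show ?thesis .
qed

lemma act_self_wpow_nat_swap:
  assumes "x \<in> X" "y \<in> X" "z \<in> X"
    and "act op y (wpow_nat [y, z] m) = act op y (wpow [x, y] M)"
  shows "act op y (wpow_nat [z, y] m) = act op y (wpow [x, y] (- M))"
proof -
  have "act op y (wpow_nat [z, y] m) = act op y (wpow_nat [y, z] m @ [y])"
    unfolding wpow_nat_pair_snoc using assms(2) by simp
  also have "\<dots> = act op y (wpow [x, y] M @ [y])" using assms(4) by simp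
  also have "\<dots> = act op y (wpow [x, y] (- M))"
    using act_wpow_snoc_reflect[of y x y M] assms(1,2) by simp
  finally show ?thesis .
qed

lemma act_wpow_nat_double_fixed_of_pair_fixed:
  assumes "x \<in> X" "y \<in> X" "z \<in> X" and "act op z [y, x] = z"
    and rel: "act op y (wpow_nat [z, y] m) = act op y (wpow [x, y] M)"
  shows "act op z (wpow_nat [z, y] (2 * m)) = z"
proof -
  have "act op z [x, y] = z" using assms(1-4) act_pair_fixed_iff by metis
  have "wpow [z, y] (2 * int m) = wpow_nat [z, y] (2 * m)"
    by (metis wpow_of_nat of_nat_mult of_nat_numeral)
  then have "act op z (wpow_nat [z, y] (2 * m)) = op (op z y) (act op y (wpow [z, y] (int m)))"
    using op_act_wpow_pair[of "op z y" z y "int m"] assms(2,3) by simp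
  also have "\<dots> = op (op z y) (act op y (wpow [x, y] M))" using rel by simp
  also have "\<dots> = act op z (wpow [x, y] (2 * M))" using op_act_wpow_pair assms(1-3) by simp
  also have "\<dots> = z" using act_wpow_fixed \<open>act op z [x, y] = z\<close> assms(1-3) by simp
  finally show ?thesis .
qed

lemma act_wpow_nat_snoc_commute:
  assumes "x \<in> X" "y \<in> X" "z \<in> X" and "acts_commute [y, x] [z]"
  shows "act op x (wpow_nat [z, x] i @ wpow_nat [y, x] j @ [z])
    = act op x (wpow_nat [z, x] i @ [z] @ wpow_nat [y, x] j)"
  using acts_commuteD[OF acts_commute_wpow_nat[OF _ assms(4)]] assms(1-3) by simp

lemma act_wpow_nat_Suc_commute:
  assumes "x \<in> X" "y \<in> X" "z \<in> X" and "acts_commute [x, y] [z]"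
  shows "act op x (wpow_nat [z, x] i @ wpow_nat [x, y] j @ [x, y, z])
    = act op x (wpow_nat [z, x] (Suc i) @ wpow_nat [y, x] j @ [y])"
proof -
  have "wpow_nat [z, x] (Suc i) @ wpow_nat [y, x] j @ [y]
      = wpow_nat [z, x] i @ [z] @ (x # wpow_nat [y, x] j) @ [y]"
    by (simp add: wpow_nat_Suc_right)
  also have "\<dots> = wpow_nat [z, x] i @ [z] @ wpow_nat [x, y] (Suc j)"
    by (simp flip: wpow_nat_pair_snoc add: wpow_nat_Suc_right)
  finally have rhs: "wpow_nat [z, x] (Suc i) @ wpow_nat [y, x] j @ [y]
      = wpow_nat [z, x] i @ [z] @ wpow_nat [x, y] (Suc j)" .
  have lhs: "wpow_nat [x, y] j @ [x, y, z] = wpow_nat [x, y] (Suc j) @ [z]"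
    by (simp add: wpow_nat_Suc_right)
  have "acts_commute (wpow_nat [x, y] (Suc j)) [z]"
    using acts_commute_wpow_nat assms by simp
  from acts_commuteD[OF this, of "act op x (wpow_nat [z, x] i)"] show ?thesis
    unfolding lhs rhs using assms(1,3) by simp
qed

lemma act_wpow_nat_snoc_eq_of_pair_fixed:
  assumes "x \<in> X" "y \<in> X" "z \<in> X" and "act op z [x, y] = z"
  shows "act op z (wpow_nat [x, z] i @ [x]) = act op z (wpow_nat [x, z] i @ [y])"
proof -
  have "act op (act op z (wpow_nat [x, z] i)) [x, y] = act op z (wpow_nat [x, z] i)"
  proof (induction i)
    case (Suc i)
    define T where "T = act op z (wpow_nat [x, z] i)"
    have T: "T \<in> X" using assms(1,3) by (simp add: T_def)
    have "op T x = op T y" using Suc.IH T assms(1,2) act_pair_fixed_iff unfolding T_def by blast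
    have "act op (act op T [x, z]) [x, y] = act op (op T x) ([z] @ [x, y])" by simp
    also have "\<dots> = act op (op T x) ([x, y] @ [z])"
      using acts_commuteD[OF acts_commute_of_act_fixed[OF assms] op_closed[OF T assms(1)]] by simp
    also have "\<dots> = act op T [y, z]" using T assms(1,2) by simp
    also have "\<dots> = act op T [x, z]" using \<open>op T x = op T y\<close> by simp
    finally show ?case by (simp add: T_def wpow_nat_Suc_right)
  qed (use assms(4) in simp)
  then show ?thesis using act_pair_fixed_iff assms(1-3) by simp
qed

end

theorem lemma4p4:
  fixes k p q :: int and X :: "'a set" and op :: "'a \<Rightarrow> 'a \<Rightarrow> 'a" and a b c :: 'a
  assumes "q > 0" and "gcd p q = 1" and "even (k * q - p)"
    and "inv_quandle X op" and "a \<in> X" and "b \<in> X" and "c \<in> X"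
    and R1: "act op c [a, b] = c"
    and R2: "act op a (wpow [c, a] q) = act op a (wpow [b, a] ((k * q - p) div 2))"
    and R3: "act op b (wpow [b, c] q) = act op b (wpow [a, b] ((k * q - p) div 2))"
  shows "act op c (wpow [a, c] (2 * q)) = c
    \<and> act op a (wpow [c, a] (2 * q)) = a
    \<and> act op b (wpow [c, b] (2 * q)) = b
    \<and> act op a (wpow [b, a] ((k * q - p) div 2)) = act op a (wpow [a, c] q)
    \<and> act op b (wpow [a, b] ((k * q - p) div 2)) = act op b (wpow [b, c] q)
    \<and> (\<forall>i j. 0 \<le> i \<and> i \<le> q \<and> 0 \<le> j \<and> j \<le> \<bar>k * q - p\<bar> div 2 \<longrightarrow>
         act op a (wpow [c, a] i @ wpow [b, a] j @ [c]) = act op a (wpow [c, a] i @ [c] @ wpow [b, a] j)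
       \<and> act op b (wpow [c, b] i @ wpow [a, b] j @ [c]) = act op b (wpow [c, b] i @ [c] @ wpow [a, b] j)
       \<and> act op a (wpow [c, a] i @ wpow [a, b] j @ [a, b, c]) = act op a (wpow [c, a] (i + 1) @ wpow [b, a] j @ [b])
       \<and> act op b (wpow [c, b] i @ wpow [b, a] j @ [b, a, c]) = act op b (wpow [c, b] (i + 1) @ wpow [a, b] j @ [a]))
    \<and> (\<forall>i::nat. act op c (wpow [a, c] (int i) @ [a]) = act op c (wpow [a, c] (int i) @ [b]))"
proof -
  interpret involutory_quandle X op by (rule involutory_quandle.intro) fact
  note mem = \<open>a \<in> X\<close> \<open>b \<in> X\<close> \<open>c \<in> X\<close>
  define N where "N = (k * q - p) div 2"
  obtain Q where q: "q = int Q" using \<open>q > 0\<close> by (metis less_imp_le nonneg_int_cases)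
  have "odd Q" using odd_of_coprime_even_diff[OF \<open>gcd p q = 1\<close> \<open>even (k * q - p)\<close>] q by simp
  have R2': "act op a (wpow_nat [c, a] Q) = act op a (wpow [b, a] N)" using R2 by (simp add: q N_def)
  have R3': "act op b (wpow_nat [b, c] Q) = act op b (wpow [a, b] N)" using R3 by (simp add: q N_def)
  have "act op c [b, a] = c" using R1 mem act_pair_fixed_iff by metis
  then have comm_ab: "acts_commute [a, b] [c]" and comm_ba: "acts_commute [b, a] [c]"
    using R1 mem acts_commute_of_act_fixed by auto
  have a_fixed: "act op a (wpow_nat [c, a] (2 * Q)) = a"
    using act_self_wpow_nat_double_fixed[OF mem(2,1,3) comm_ba \<open>odd Q\<close> R2'] .
  have b_fixed: "act op b (wpow_nat [c, b] (2 * Q)) = b"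
    using act_self_wpow_nat_double_fixed[OF mem comm_ab \<open>odd Q\<close> act_self_wpow_nat_swap[OF mem R3']] .
  have c_fixed: "act op c (wpow_nat [a, c] (2 * Q)) = c"
    using act_rev_fixed[OF _ _ act_wpow_nat_double_fixed_of_pair_fixed[OF mem(2,1,3) R1 R2']] mem
    by (simp add: rev_wpow_nat)
  have "act op a (wpow_nat [a, c] Q) = act op a (wpow_nat [c, a] Q)"
    using act_rev_eq_of_double_fixed[of a "wpow_nat [c, a] Q"] a_fixed mem
    by (simp add: mult_2 wpow_nat_add rev_wpow_nat)
  then have a_rel: "act op a (wpow [b, a] ((k * q - p) div 2)) = act op a (wpow [a, c] q)"
    using R2' q by (simp add: N_def)
  have "wpow w (2 * q) = wpow_nat w (2 * Q)" for w :: "'a list"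
    using q by (metis wpow_of_nat of_nat_mult of_nat_numeral)
  moreover have "wpow w (int i + 1) = wpow_nat w (Suc i)" for w :: "'a list" and i
    by (metis wpow_of_nat of_nat_Suc add.commute)
  ultimately show ?thesis
    using a_fixed b_fixed c_fixed a_rel R3
      act_wpow_nat_snoc_commute[OF mem(1,2,3) comm_ba] act_wpow_nat_snoc_commute[OF mem(2,1,3) comm_ab]
      act_wpow_nat_Suc_commute[OF mem(1,2,3) comm_ab] act_wpow_nat_Suc_commute[OF mem(2,1,3) comm_ba]
      act_wpow_nat_snoc_eq_of_pair_fixed[OF mem R1]
    by (auto elim!: nonneg_int_cases)
qed

end
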